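(* Let $A\subset\mathbb{N}\setminus\{1\}$. If $L(A)$ is densely lineable in $\ell^\infty$, then $A\cap(A-1)$ is infinite, where $A-1=\{a-1:a\in A\}$. In particular, $L(2\mathbb{N}+1)$ and $L(2\mathbb{N})$ are not densely lineable.
   Context: $\ell^\infty$ is the Banach space of bounded real sequences with the sup norm. For $x\in\ell^\infty$, $L_x$ denotes the set of accumulation points (subsequential limits) of $x$. For a set $A$ of cardinalities, $L(A)=\{x\in\ell^\infty: |L_x|\in A\}$. A subset $Y$ of $\ell^\infty$ is densely lineable if $Y\cup\{0\}$ contains an infinite-dimensional linear subspace that is dense in $\ell^\infty$ (norm topology). *)

theory Defs
  imports "HOL-Analysis.Analysis"
begin

text \<open>The Banach space of bounded real sequences with the sup norm is modelled as the
  type of bounded continuous functions from nat (discrete topology) to real.\<close>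
type_synonym linf = "nat \<Rightarrow>\<^sub>C real"

definition acc_points :: "linf \<Rightarrow> real set" where
  "acc_points x = {t. \<exists>r::nat \<Rightarrow> nat. strict_mono r \<and> ((\<lambda>n. x (r n)) \<longlonglongrightarrow> t)}"

definition Lset :: "nat set \<Rightarrow> linf set" where
  "Lset A = {x. finite (acc_points x) \<and> card (acc_points x) \<in> A}"

definition densely_lineable :: "linf set \<Rightarrow> bool" where
  "densely_lineable Y \<longleftrightarrow>
     (\<exists>V. subspace V \<and> (\<exists>B. B \<subseteq> V \<and> independent B \<and> infinite B)
          \<and> V \<subseteq> Y \<union> {0} \<and> closure V = UNIV)"

end

theory Submission
  imports Defs
begin

text \<open>Let \<open>V \<subseteq> L(A) \<union> {0}\<close> be a dense subspace. Density yields \<open>x \<in> V\<close> uniformly close to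
  \<open>n mod m\<close>, so \<open>x\<close> has at least \<open>m\<close> (and finitely many) accumulation points, and it yields
  \<open>z \<in> V\<close> uniformly close to \<open>h \<circ> x\<close>, where the bump \<open>h\<close> is \<open>1\<close> at one accumulation point \<open>a\<^sub>1\<close>
  of \<open>x\<close> and \<open>0\<close> at the others. The accumulation points of \<open>x + c z\<close> are the images of the joint
  accumulation points \<open>(a, b)\<close> of \<open>(x, z)\<close> under \<open>a + c b\<close>. For all but finitely many \<open>c\<close> this
  map is injective; for one particular \<open>c\<close> it identifies exactly the top point over \<open>a\<^sub>1\<close> with
  the bottom point over another accumulation point \<open>a\<^sub>2\<close>. So \<open>k - 1\<close> and \<open>k\<close> both lie in \<open>A\<close>,
  for arbitrarily large \<open>k\<close>.\<close>

lemma norm_bounded_imp_convergent_subseq: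
  fixes f :: "nat \<Rightarrow> 'a::{heine_borel,real_normed_vector}"
  assumes "\<And>n. norm (f n) \<le> B"
  obtains s l where "strict_mono s" "(\<lambda>n. f (s n)) \<longlonglongrightarrow> l"
proof -
  have "bounded (range f)"
    unfolding bounded_iff using assms by blast
  from bounded_imp_convergent_subsequence[OF this] show ?thesis
    using that by (auto simp: o_def)
qed

lemma dense_uniform_approx:
  fixes V :: "linf set" and f :: "nat \<Rightarrow> real"
  assumes "closure V = UNIV" "e > 0" "\<And>n. \<bar>f n\<bar> \<le> B"
  obtains v where "v \<in> V" "\<And>n. \<bar>v n - f n\<bar> < e"
proof -
  have f: "f \<in> bcontfun"
    by (rule bcontfun_normI[where b = B]) (use assms(3) in auto)
  have "Bcontfun f \<in> closure V"
    using assms(1) by simp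
  then obtain v where v: "v \<in> V" "dist v (Bcontfun f) < e"
    using closure_approachable assms(2) by blast
  have "\<bar>v n - f n\<bar> < e" for n
    using dist_fun_lt_imp_dist_val_lt[OF v(2), of n] Bcontfun_inverse[OF f]
    by (simp add: dist_real_def)
  with v(1) show ?thesis
    using that by blast
qed


section \<open>Accumulation points\<close>

lemma acc_points_0: "acc_points 0 = {0}"
proof -
  have "strict_mono (id :: nat \<Rightarrow> nat)"
    by (simp add: strict_mono_def)
  then show ?thesis
    unfolding acc_points_def by (auto simp: LIMSEQ_const_iff)
qed

lemma abs_acc_points_le_norm:
  assumes "t \<in> acc_points x"
  shows "\<bar>t\<bar> \<le> norm x"
proof -
  from assms obtain r where "(\<lambda>n. x (r n)) \<longlonglongrightarrow> t"
    unfolding acc_points_def by blast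
  then have "(\<lambda>n. \<bar>x (r n)\<bar>) \<longlonglongrightarrow> \<bar>t\<bar>"
    by (rule tendsto_rabs)
  moreover have "\<bar>x (r n)\<bar> \<le> norm x" for n
    using norm_bounded[of x] by (metis real_norm_def)
  ultimately show ?thesis
    by (meson LIMSEQ_le_const2)
qed

text \<open>Along each progression \<open>j + m k\<close> with \<open>j < m\<close> the sequence has an accumulation point
  within \<open>1/3\<close> of \<open>j\<close>.\<close>

lemma card_acc_points_ge_mod:
  fixes x :: linf
  assumes "m > 0" "\<And>n. \<bar>x n - real (n mod m)\<bar> < 1/3" "finite (acc_points x)"
  shows "m \<le> card (acc_points x)"
proof -
  have "\<exists>t \<in> acc_points x. \<bar>t - real j\<bar> \<le> 1/3" if "j < m" for j
  proof -
    define r where "r k = j + m * k" for k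
    have r: "strict_mono r"
      unfolding r_def using assms(1) by (intro strict_monoI) auto
    obtain s t where s: "strict_mono s" "(\<lambda>k. x (r (s k))) \<longlonglongrightarrow> t"
      using norm_bounded_imp_convergent_subseq[of "\<lambda>k. x (r k)" "norm x"] norm_bounded[of x]
      by blast
    have "strict_mono (r \<circ> s)"
      using r s(1) by (rule strict_mono_o)
    then have "t \<in> acc_points x"
      unfolding acc_points_def using s(2) by (auto simp: o_def)
    moreover have "(\<lambda>k. \<bar>x (r (s k)) - real j\<bar>) \<longlonglongrightarrow> \<bar>t - real j\<bar>"
      using s(2) by (intro tendsto_intros)
    moreover have "\<bar>x (r (s k)) - real j\<bar> \<le> 1/3" for k
      using assms(2)[of "r (s k)"] \<open>j < m\<close> by (simp add: r_def)
    ultimately show ?thesis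
      by (meson LIMSEQ_le_const2)
  qed
  then obtain t where t: "\<And>j. j < m \<Longrightarrow> t j \<in> acc_points x \<and> \<bar>t j - real j\<bar> \<le> 1/3"
    by metis
  have "inj_on t {..<m}"
  proof (rule inj_onI)
    fix i j
    assume "i \<in> {..<m}" "j \<in> {..<m}" "t i = t j"
    then have "\<bar>t j - real i\<bar> \<le> 1/3" "\<bar>t j - real j\<bar> \<le> 1/3"
      using t[of i] t[of j] by auto
    then have "\<bar>real i - real j\<bar> \<le> 2/3"
      by linarith
    then show "i = j"
      by linarith
  qed
  moreover have "t ` {..<m} \<subseteq> acc_points x"
    using t by auto
  ultimately show ?thesis
    using card_inj_on_le[OF _ _ assms(3)] by fastforce
qed


section \<open>Joint accumulation points\<close>

definition joint_acc_points :: "linf \<Rightarrow> linf \<Rightarrow> (real \<times> real) set" where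
  "joint_acc_points x z =
     {p. \<exists>r::nat \<Rightarrow> nat. strict_mono r \<and> ((\<lambda>n. (x (r n), z (r n))) \<longlonglongrightarrow> p)}"

lemma joint_acc_points_subseq:
  fixes r :: "nat \<Rightarrow> nat"
  assumes "strict_mono r"
  obtains s p where "strict_mono s" "p \<in> joint_acc_points x z"
    "(\<lambda>n. (x (r (s n)), z (r (s n)))) \<longlonglongrightarrow> p"
proof -
  have "norm (x n, z n) \<le> norm x + norm z" for n
    using norm_Pair_le[of "x n" "z n"] norm_bounded[of x n] norm_bounded[of z n] by linarith
  then obtain s p where s: "strict_mono s" "(\<lambda>n. (x (r (s n)), z (r (s n)))) \<longlonglongrightarrow> p"
    using norm_bounded_imp_convergent_subseq[of "\<lambda>n. (x (r n), z (r n))"] by blast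
  moreover have "strict_mono (r \<circ> s)"
    using assms s(1) by (rule strict_mono_o)
  ultimately have "p \<in> joint_acc_points x z"
    unfolding joint_acc_points_def by (auto simp: o_def)
  with s that show ?thesis
    by blast
qed

lemma fst_joint_acc_points: "fst ` joint_acc_points x z = acc_points x"
proof
  show "fst ` joint_acc_points x z \<subseteq> acc_points x"
    unfolding joint_acc_points_def acc_points_def using tendsto_fst by fastforce
next
  show "acc_points x \<subseteq> fst ` joint_acc_points x z"
  proof
    fix a
    assume "a \<in> acc_points x"
    then obtain r where r: "strict_mono r" "(\<lambda>n. x (r n)) \<longlonglongrightarrow> a"
      unfolding acc_points_def by blast
    obtain s p where s: "strict_mono s" "p \<in> joint_acc_points x z"
      "(\<lambda>n. (x (r (s n)), z (r (s n)))) \<longlonglongrightarrow> p"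
      using joint_acc_points_subseq[OF r(1)] by blast
    have "(\<lambda>n. x (r (s n))) \<longlonglongrightarrow> fst p"
      using tendsto_fst[OF s(3)] by simp
    moreover have "(\<lambda>n. x (r (s n))) \<longlonglongrightarrow> a"
      using LIMSEQ_subseq_LIMSEQ[OF r(2) s(1)] by (simp add: o_def)
    ultimately have "a = fst p"
      using LIMSEQ_unique by blast
    with s(2) show "a \<in> fst ` joint_acc_points x z"
      by blast
  qed
qed

lemma finite_joint_acc_points:
  assumes "finite (acc_points x)" "finite (acc_points z)"
  shows "finite (joint_acc_points x z)"
proof (rule finite_subset)
  show "joint_acc_points x z \<subseteq> acc_points x \<times> acc_points z"
    unfolding joint_acc_points_def acc_points_def using tendsto_fst tendsto_snd by fastforce
qed (use assms in simp)

lemma acc_points_add_scaleR: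
  "acc_points (x + c *\<^sub>R z) = (\<lambda>(a, b). a + c * b) ` joint_acc_points x z"
proof
  show "(\<lambda>(a, b). a + c * b) ` joint_acc_points x z \<subseteq> acc_points (x + c *\<^sub>R z)"
  proof clarify
    fix a b
    assume "(a, b) \<in> joint_acc_points x z"
    then obtain r where r: "strict_mono r" "(\<lambda>n. (x (r n), z (r n))) \<longlonglongrightarrow> (a, b)"
      unfolding joint_acc_points_def by blast
    have "(\<lambda>n. x (r n) + c * z (r n)) \<longlonglongrightarrow> a + c * b"
      using tendsto_fst[OF r(2)] tendsto_snd[OF r(2)] by (auto intro!: tendsto_intros)
    then show "a + c * b \<in> acc_points (x + c *\<^sub>R z)"
      unfolding acc_points_def using r(1) by auto
  qed
next
  show "acc_points (x + c *\<^sub>R z) \<subseteq> (\<lambda>(a, b). a + c * b) ` joint_acc_points x z"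
  proof
    fix t
    assume "t \<in> acc_points (x + c *\<^sub>R z)"
    then obtain r where r: "strict_mono r" "(\<lambda>n. x (r n) + c * z (r n)) \<longlonglongrightarrow> t"
      unfolding acc_points_def by auto
    obtain s p where s: "strict_mono s" "p \<in> joint_acc_points x z"
      "(\<lambda>n. (x (r (s n)), z (r (s n)))) \<longlonglongrightarrow> p"
      using joint_acc_points_subseq[OF r(1)] by blast
    have "(\<lambda>n. x (r (s n)) + c * z (r (s n))) \<longlonglongrightarrow> fst p + c * snd p"
      using tendsto_fst[OF s(3)] tendsto_snd[OF s(3)] by (auto intro!: tendsto_intros)
    moreover have "(\<lambda>n. x (r (s n)) + c * z (r (s n))) \<longlonglongrightarrow> t"
      using LIMSEQ_subseq_LIMSEQ[OF r(2) s(1)] by (simp add: o_def)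
    ultimately have "t = fst p + c * snd p"
      using LIMSEQ_unique by blast
    with s(2) show "t \<in> (\<lambda>(a, b). a + c * b) ` joint_acc_points x z"
      by (auto intro!: image_eqI[where x = p] split: prod.split)
  qed
qed

lemma joint_acc_points_near_graph:
  assumes "(a, b) \<in> joint_acc_points x z" "isCont h a" "\<And>n. \<bar>z n - h (x n)\<bar> \<le> e"
  shows "\<bar>b - h a\<bar> \<le> e"
proof -
  obtain r where r: "(\<lambda>n. (x (r n), z (r n))) \<longlonglongrightarrow> (a, b)"
    using assms(1) unfolding joint_acc_points_def by blast
  have "(\<lambda>n. h (x (r n))) \<longlonglongrightarrow> h a"
    using isCont_tendsto_compose[OF assms(2)] tendsto_fst[OF r] by simp
  then have "(\<lambda>n. \<bar>z (r n) - h (x (r n))\<bar>) \<longlonglongrightarrow> \<bar>b - h a\<bar>"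
    using tendsto_snd[OF r] by (auto intro!: tendsto_intros)
  then show ?thesis
    using assms(3) by (meson LIMSEQ_le_const2)
qed


lemma finite_imp_dist_ge_pos:
  fixes S :: "'a::metric_space set"
  assumes "finite S"
  obtains g where "g > 0" "\<And>a a'. a \<in> S \<Longrightarrow> a' \<in> S \<Longrightarrow> a \<noteq> a' \<Longrightarrow> g \<le> dist a a'"
proof
  define D where "D = (\<lambda>(a, a'). dist a a') ` (S \<times> S - Id)"
  have "finite D"
    unfolding D_def using assms by simp
  then show "Min (insert 1 D) > 0"
    unfolding D_def by auto
  show "Min (insert 1 D) \<le> dist a a'" if "a \<in> S" "a' \<in> S" "a \<noteq> a'" for a a'
    using \<open>finite D\<close> that unfolding D_def by (auto intro!: Min_le)
qed

lemma finite_imp_bump: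
  fixes S :: "'a::metric_space set"
  assumes "finite S" "a\<^sub>1 \<in> S"
  obtains h :: "'a \<Rightarrow> real" where "\<And>t. isCont h t" "\<And>t. \<bar>h t\<bar> \<le> 1"
    "\<And>a. a \<in> S \<Longrightarrow> h a = (if a = a\<^sub>1 then 1 else 0)"
proof -
  obtain g where g: "g > 0" "\<And>a a'. a \<in> S \<Longrightarrow> a' \<in> S \<Longrightarrow> a \<noteq> a' \<Longrightarrow> g \<le> dist a a'"
    using finite_imp_dist_ge_pos[OF assms(1)] by blast
  define h where "h t = max 0 (1 - dist t a\<^sub>1 / g)" for t
  have "isCont h t" for t
    unfolding h_def[abs_def] using g(1) by (intro continuous_intros) auto
  moreover have "\<bar>h t\<bar> \<le> 1" for t
    unfolding h_def using g(1) by auto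
  moreover have "h a = (if a = a\<^sub>1 then 1 else 0)" if "a \<in> S" for a
  proof (cases "a = a\<^sub>1")
    case False
    with that have "g \<le> dist a a\<^sub>1"
      using g(2) assms(2) by auto
    with g(1) show ?thesis
      unfolding h_def by (simp add: False)
  qed (simp add: h_def)
  ultimately show ?thesis
    using that by blast
qed

text \<open>Two points of a finite planar set collide under \<open>(a, b) \<mapsto> a + c b\<close> only for one of the
  finitely many slopes they determine.\<close>

lemma finite_imp_inj_on_linear_comb:
  fixes K :: "(real \<times> real) set"
  assumes "finite K"
  obtains c where "inj_on (\<lambda>(a, b). a + c * b) K"
proof -
  let ?F = "(\<lambda>((a, b), (a', b')). (a' - a) / (b - b')) ` (K \<times> K)"
  obtain c where c: "c \<notin> ?F"
    using ex_new_if_finite[of ?F] assms infinite_UNIV_char_0 by blast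
  have "inj_on (\<lambda>(a, b). a + c * b) K"
  proof (rule inj_onI, clarify)
    fix a b a' b'
    assume K: "(a, b) \<in> K" "(a', b') \<in> K" and eq: "a + c * b = a' + c * b'"
    show "a = a' \<and> b = b'"
    proof (cases "b = b'")
      case False
      with eq have "c = (a' - a) / (b - b')"
        by (simp add: field_simps)
      with K c show ?thesis
        by (auto intro: rev_image_eqI[where x = "((a, b), (a', b'))"])
    qed (use eq in simp)
  qed
  with that show ?thesis .
qed

lemma card_image_merging_one_pair:
  assumes "finite K" "p \<in> K" "q \<in> K" "p \<noteq> q" "f p = f q"
    and "\<And>u v. u \<in> K \<Longrightarrow> v \<in> K \<Longrightarrow> f u = f v \<Longrightarrow> u = v \<or> {u, v} = {p, q}"
  shows "card (f ` K) = card K - 1"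
proof -
  have "f ` K = f ` (K - {p})"
    using assms(3-5) by (auto intro: rev_image_eqI[where x = q])
  moreover have "inj_on f (K - {p})"
    using assms(6) by (auto simp: inj_on_def doubleton_eq_iff)
  ultimately show ?thesis
    using assms(1,2) by (simp add: card_image)
qed

text \<open>The slope \<open>c\<close> through the top point over \<open>a\<^sub>1\<close> and the bottom point over \<open>a\<^sub>2\<close> makes
  these two collide, and \<open>\<epsilon>\<close> is too small compared to the gaps between abscissae for any
  other collision.\<close>

lemma linear_comb_collision_cases:
  fixes K :: "(real \<times> real) set"
  assumes gap: "\<And>a a'. a \<in> fst ` K \<Longrightarrow> a' \<in> fst ` K \<Longrightarrow> a \<noteq> a' \<Longrightarrow> g \<le> \<bar>a - a'\<bar>"
    and near: "\<And>a b. (a, b) \<in> K \<Longrightarrow> \<bar>b - (if a = a\<^sub>1 then 1 else 0)\<bar> \<le> \<epsilon>"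
    and s: "(a\<^sub>1, s) \<in> K" "\<And>b. (a\<^sub>1, b) \<in> K \<Longrightarrow> b \<le> s"
    and t: "(a\<^sub>2, t) \<in> K" "\<And>b. (a\<^sub>2, b) \<in> K \<Longrightarrow> t \<le> b" "a\<^sub>2 \<noteq> a\<^sub>1"
    and c: "c * (s - t) = a\<^sub>2 - a\<^sub>1" "c \<noteq> 0" "4 * \<bar>c\<bar> * \<epsilon> < g"
    and uv: "(a, b) \<in> K" "(a', b') \<in> K" "a + c * b = a' + c * b'"
  shows "(a, b) = (a', b') \<or> {(a, b), (a', b')} = {(a\<^sub>1, s), (a\<^sub>2, t)}"
proof -
  have small: "\<bar>u - u'\<bar> < g" if "u - u' = c * e" "\<bar>e\<bar> \<le> 4 * \<epsilon>" for u u' e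
  proof -
    have "\<bar>u - u'\<bar> = \<bar>c\<bar> * \<bar>e\<bar>"
      using that(1) by (simp add: abs_mult)
    also have "\<dots> \<le> \<bar>c\<bar> * (4 * \<epsilon>)"
      using that(2) by (intro mult_left_mono) auto
    finally show ?thesis
      using c(3) by linarith
  qed
  have merge: "a' = a\<^sub>2 \<and> b = s \<and> b' = t"
    if "(a\<^sub>1, b) \<in> K" "(a', b') \<in> K" "a' \<noteq> a\<^sub>1" "a\<^sub>1 + c * b = a' + c * b'" for b a' b'
  proof -
    have "a' - a\<^sub>2 = c * (b - b' - (s - t))"
      using that(4) c(1) by (simp add: algebra_simps)
    moreover have "\<bar>b - b' - (s - t)\<bar> \<le> 4 * \<epsilon>"
      using near[OF that(1)] near[OF that(2)] near[OF s(1)] near[OF t(1)] that(3) t(3) by auto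
    ultimately have "\<bar>a' - a\<^sub>2\<bar> < g"
      by (rule small)
    moreover have "a' \<in> fst ` K" "a\<^sub>2 \<in> fst ` K"
      using that(2) t(1) by force+
    ultimately have "a' = a\<^sub>2"
      using gap by fastforce
    then have "c * (b - b') = c * (s - t)"
      using that(4) c(1) by (simp add: algebra_simps)
    then have "b - b' = s - t"
      using c(2) by simp
    moreover have "b \<le> s" "t \<le> b'"
      using s(2)[OF that(1)] t(2) that(2) \<open>a' = a\<^sub>2\<close> by auto
    ultimately show ?thesis
      using \<open>a' = a\<^sub>2\<close> by linarith
  qed
  consider "a = a'" | "a = a\<^sub>1" "a' \<noteq> a\<^sub>1" | "a' = a\<^sub>1" "a \<noteq> a\<^sub>1" | "a \<noteq> a'" "a \<noteq> a\<^sub>1" "a' \<noteq> a\<^sub>1"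
    by blast
  then show ?thesis
  proof cases
    case 1
    then show ?thesis
      using uv(3) c(2) by simp
  next
    case 2
    then show ?thesis
      using merge[of b a' b'] uv by auto
  next
    case 3
    then show ?thesis
      using merge[of b' a b] uv by auto
  next
    case 4
    have "a - a' = c * (b' - b)"
      using uv(3) by (simp add: algebra_simps)
    moreover have "\<bar>b' - b\<bar> \<le> 4 * \<epsilon>"
      using near[OF uv(1)] near[OF uv(2)] 4 by auto
    ultimately have "\<bar>a - a'\<bar> < g"
      by (rule small)
    moreover have "a \<in> fst ` K" "a' \<in> fst ` K"
      using uv(1,2) by force+
    ultimately show ?thesis
      using gap 4(1) by fastforce
  qed
qed

lemma linear_comb_merging_one_pair:
  fixes K :: "(real \<times> real) set"
  assumes "finite K" "a\<^sub>1 \<in> fst ` K" "a\<^sub>2 \<in> fst ` K" "a\<^sub>1 \<noteq> a\<^sub>2"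
    and gap: "\<And>a a'. a \<in> fst ` K \<Longrightarrow> a' \<in> fst ` K \<Longrightarrow> a \<noteq> a' \<Longrightarrow> g \<le> \<bar>a - a'\<bar>"
    and bound: "\<And>a. a \<in> fst ` K \<Longrightarrow> \<bar>a\<bar> \<le> M"
    and "\<epsilon> \<le> 1/4" "16 * M * \<epsilon> < g"
    and near: "\<And>a b. (a, b) \<in> K \<Longrightarrow> \<bar>b - (if a = a\<^sub>1 then 1 else 0)\<bar> \<le> \<epsilon>"
  obtains c where "card ((\<lambda>(a, b). a + c * b) ` K) = card K - 1"
proof -
  have fibre: "finite {b. (a, b) \<in> K}" "{b. (a, b) \<in> K} \<noteq> {}" if "a \<in> fst ` K" for a
    using that finite_vimageI[OF assms(1), of "Pair a"] by (auto simp: vimage_def inj_on_def)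
  define s where "s = Max {b. (a\<^sub>1, b) \<in> K}"
  define t where "t = Min {b. (a\<^sub>2, b) \<in> K}"
  have s: "(a\<^sub>1, s) \<in> K" "\<And>b. (a\<^sub>1, b) \<in> K \<Longrightarrow> b \<le> s"
    using Max_in[OF fibre[OF assms(2)]] Max_ge[OF fibre(1)[OF assms(2)]] unfolding s_def by auto
  have t: "(a\<^sub>2, t) \<in> K" "\<And>b. (a\<^sub>2, b) \<in> K \<Longrightarrow> t \<le> b"
    using Min_in[OF fibre[OF assms(3)]] Min_le[OF fibre(1)[OF assms(3)]] unfolding t_def by auto
  have "1/2 \<le> s - t" "0 \<le> \<epsilon>"
    using near[OF s(1)] near[OF t(1)] assms(4,7) by auto
  define c where "c = (a\<^sub>2 - a\<^sub>1) / (s - t)"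
  have cd: "c * (s - t) = a\<^sub>2 - a\<^sub>1"
    unfolding c_def using \<open>1/2 \<le> s - t\<close> by simp
  then have "c \<noteq> 0"
    using assms(4) by auto
  have "\<bar>c\<bar> = \<bar>a\<^sub>2 - a\<^sub>1\<bar> / (s - t)"
    unfolding c_def using \<open>1/2 \<le> s - t\<close> by simp
  also have "\<dots> \<le> (2 * M) / (1/2)"
    using bound[OF assms(2)] bound[OF assms(3)] \<open>1/2 \<le> s - t\<close> by (intro frac_le) auto
  finally have "\<bar>c\<bar> * \<epsilon> \<le> 4 * M * \<epsilon>"
    using \<open>0 \<le> \<epsilon>\<close> by (intro mult_right_mono) auto
  then have "4 * \<bar>c\<bar> * \<epsilon> < g"
    using assms(8) by linarith
  note collision = linear_comb_collision_cases[OF gap near s t assms(4)[symmetric] cd \<open>c \<noteq> 0\<close> this]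
  have "card ((\<lambda>(a, b). a + c * b) ` K) = card K - 1"
  proof (rule card_image_merging_one_pair[OF assms(1) s(1) t(1)])
    show "(a\<^sub>1, s) \<noteq> (a\<^sub>2, t)"
      using assms(4) by simp
    show "(\<lambda>(a, b). a + c * b) (a\<^sub>1, s) = (\<lambda>(a, b). a + c * b) (a\<^sub>2, t)"
      using cd by (simp add: algebra_simps)
  next
    fix u v
    assume "u \<in> K" "v \<in> K" "(\<lambda>(a, b). a + c * b) u = (\<lambda>(a, b). a + c * b) v"
    moreover obtain a b a' b' where "u = (a, b)" "v = (a', b')"
      by fastforce
    ultimately show "u = v \<or> {u, v} = {(a\<^sub>1, s), (a\<^sub>2, t)}"
      using collision[of a b a' b'] by simp
  qed
  with that show ?thesis .
qed

lemma finite_acc_points_Lset: "v \<in> Lset A \<union> {0} \<Longrightarrow> finite (acc_points v)"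
  unfolding Lset_def by (auto simp: acc_points_0)

lemma card_acc_points_Lset:
  "v \<in> Lset A \<union> {0} \<Longrightarrow> card (acc_points v) \<noteq> 1 \<Longrightarrow> card (acc_points v) \<in> A"
  unfolding Lset_def by (auto simp: acc_points_0)

lemma acc_points_perturbation_consecutive_cards:
  fixes x z :: linf and h :: "real \<Rightarrow> real"
  assumes fin: "finite (acc_points x)" "finite (acc_points z)"
    and a: "a\<^sub>1 \<in> acc_points x" "a\<^sub>2 \<in> acc_points x" "a\<^sub>1 \<noteq> a\<^sub>2"
    and gap: "\<And>a a'. a \<in> acc_points x \<Longrightarrow> a' \<in> acc_points x \<Longrightarrow> a \<noteq> a' \<Longrightarrow> g \<le> \<bar>a - a'\<bar>"
    and \<epsilon>: "\<epsilon> \<le> 1/4" "16 * norm x * \<epsilon> < g"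
    and h: "\<And>t. isCont h t" "\<And>a. a \<in> acc_points x \<Longrightarrow> h a = (if a = a\<^sub>1 then 1 else 0)"
    and z: "\<And>n. \<bar>z n - h (x n)\<bar> \<le> \<epsilon>"
  obtains c\<^sub>0 c\<^sub>1 where
    "card (acc_points (x + c\<^sub>0 *\<^sub>R z)) = Suc (card (acc_points (x + c\<^sub>1 *\<^sub>R z)))"
    "card (acc_points x) \<le> card (acc_points (x + c\<^sub>0 *\<^sub>R z))"
proof -
  define K where "K = joint_acc_points x z"
  have fst_K: "fst ` K = acc_points x"
    unfolding K_def by (rule fst_joint_acc_points)
  have "finite K"
    unfolding K_def using fin by (rule finite_joint_acc_points)
  have near: "\<bar>b - (if a = a\<^sub>1 then 1 else 0)\<bar> \<le> \<epsilon>" if "(a, b) \<in> K" for a b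
  proof -
    have "\<bar>b - h a\<bar> \<le> \<epsilon>"
      using joint_acc_points_near_graph[OF that[unfolded K_def] h(1) z] .
    moreover have "a \<in> acc_points x"
      using that fst_K by force
    ultimately show ?thesis
      using h(2) by simp
  qed
  obtain c\<^sub>1 where c\<^sub>1: "card ((\<lambda>(a, b). a + c\<^sub>1 * b) ` K) = card K - 1"
  proof (rule linear_comb_merging_one_pair[OF \<open>finite K\<close> _ _ a(3) _ _ \<epsilon> near])
    show "a\<^sub>1 \<in> fst ` K" "a\<^sub>2 \<in> fst ` K"
      using a(1,2) fst_K by auto
    show "g \<le> \<bar>a - a'\<bar>" if "a \<in> fst ` K" "a' \<in> fst ` K" "a \<noteq> a'" for a a'
      using gap that fst_K by simp
    show "\<bar>a\<bar> \<le> norm x" if "a \<in> fst ` K" for a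
      using abs_acc_points_le_norm[of a x] that fst_K by simp
  qed
  obtain c\<^sub>0 where "inj_on (\<lambda>(a, b). a + c\<^sub>0 * b) K"
    using finite_imp_inj_on_linear_comb[OF \<open>finite K\<close>] by blast
  then have c\<^sub>0: "card ((\<lambda>(a, b). a + c\<^sub>0 * b) ` K) = card K"
    by (rule card_image)
  have "card (acc_points x) \<le> card K"
    unfolding fst_K[symmetric] using \<open>finite K\<close> by (rule card_image_le)
  moreover have "card K \<noteq> 0"
    using a(1) fst_K \<open>finite K\<close> by auto
  ultimately show ?thesis
    using that[of c\<^sub>0 c\<^sub>1] c\<^sub>0 c\<^sub>1 unfolding acc_points_add_scaleR K_def by simp
qed

lemma dense_subspace_in_Lset_consecutive:
  assumes "subspace V" "V \<subseteq> Lset A \<union> {0}" "closure V = UNIV"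
  shows "\<exists>m\<ge>N. m \<in> A \<and> Suc m \<in> A"
proof -
  have fin: "finite (acc_points v)" and card_in_A: "card (acc_points v) \<noteq> 1 \<Longrightarrow> card (acc_points v) \<in> A"
    if "v \<in> V" for v
    using that assms(2) by (auto intro: finite_acc_points_Lset card_acc_points_Lset)
  have mod_bound: "\<bar>real (n mod (N + 3))\<bar> \<le> real (N + 3)" for n
    using mod_less_divisor[of "N + 3" n] by (simp only: abs_of_nat of_nat_le_iff) simp
  obtain x where x: "x \<in> V" "\<And>n. \<bar>x n - real (n mod (N + 3))\<bar> < 1/3"
    using dense_uniform_approx[where f = "\<lambda>n. real (n mod (N + 3))",
        OF assms(3) _ mod_bound, of "1/3"] by auto
  let ?S = "acc_points x"
  have card_S: "N + 3 \<le> card ?S"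
    using card_acc_points_ge_mod[OF _ x(2) fin[OF x(1)]] by simp
  then have "\<not> (\<forall>a\<in>?S. \<forall>a'\<in>?S. a = a')"
    using card_le_Suc0_iff_eq[OF fin[OF x(1)]] by simp
  then obtain a\<^sub>1 a\<^sub>2 where a: "a\<^sub>1 \<in> ?S" "a\<^sub>2 \<in> ?S" "a\<^sub>1 \<noteq> a\<^sub>2"
    by blast
  obtain g where g: "g > 0" "\<And>a a'. a \<in> ?S \<Longrightarrow> a' \<in> ?S \<Longrightarrow> a \<noteq> a' \<Longrightarrow> g \<le> dist a a'"
    using finite_imp_dist_ge_pos[OF fin[OF x(1)]] by metis
  obtain h :: "real \<Rightarrow> real" where h: "\<And>t. isCont h t" "\<And>t. \<bar>h t\<bar> \<le> 1"
    "\<And>a. a \<in> ?S \<Longrightarrow> h a = (if a = a\<^sub>1 then 1 else 0)"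
    using finite_imp_bump[OF fin[OF x(1)] a(1)] by auto
  define \<epsilon> where "\<epsilon> = min (1/4) (g / (16 * norm x + 1))"
  have "0 < 16 * norm x + 1"
    by (simp add: add_nonneg_pos)
  have \<epsilon>: "0 < \<epsilon>" "\<epsilon> \<le> 1/4" "16 * norm x * \<epsilon> < g"
  proof -
    show "0 < \<epsilon>"
      unfolding \<epsilon>_def using g(1) \<open>0 < 16 * norm x + 1\<close> by simp
    show "\<epsilon> \<le> 1/4"
      unfolding \<epsilon>_def by (rule min.cobounded1)
    have "\<epsilon> \<le> g / (16 * norm x + 1)"
      unfolding \<epsilon>_def by (rule min.cobounded2)
    then have "(16 * norm x + 1) * \<epsilon> \<le> g"
      using \<open>0 < 16 * norm x + 1\<close> by (simp add: pos_le_divide_eq mult.commute)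
    then show "16 * norm x * \<epsilon> < g"
      using \<open>0 < \<epsilon>\<close> by (simp add: algebra_simps)
  qed
  obtain z where z: "z \<in> V" "\<And>n. \<bar>z n - h (x n)\<bar> < \<epsilon>"
    using dense_uniform_approx[OF assms(3) \<epsilon>(1) h(2)] by blast
  obtain c\<^sub>0 c\<^sub>1 where c:
      "card (acc_points (x + c\<^sub>0 *\<^sub>R z)) = Suc (card (acc_points (x + c\<^sub>1 *\<^sub>R z)))"
      "card ?S \<le> card (acc_points (x + c\<^sub>0 *\<^sub>R z))"
    using acc_points_perturbation_consecutive_cards[OF fin[OF x(1)] fin[OF z(1)] a
        g(2)[unfolded dist_real_def] \<epsilon>(2,3) h(1,3) less_imp_le[OF z(2)]] by metis
  have in_V: "x + c *\<^sub>R z \<in> V" for c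
    using assms(1) x(1) z(1) by (intro subspace_add subspace_scale)
  define k where "k = card (acc_points (x + c\<^sub>1 *\<^sub>R z))"
  have "N + 2 \<le> k"
    using c card_S unfolding k_def by linarith
  then have "k \<in> A" "Suc k \<in> A"
    using card_in_A[OF in_V[of c\<^sub>1]] card_in_A[OF in_V[of c\<^sub>0]] c(1) unfolding k_def by auto
  with \<open>N + 2 \<le> k\<close> show ?thesis
    by (intro exI[of _ k]) simp
qed

lemma densely_lineable_Lset_imp_infinite:
  assumes "densely_lineable (Lset A)"
  shows "infinite (A \<inter> (\<lambda>a. a - 1) ` A)"
  unfolding infinite_nat_iff_unbounded_le
proof
  fix N
  obtain V where V: "subspace V" "V \<subseteq> Lset A \<union> {0}" "closure V = UNIV"
    using assms unfolding densely_lineable_def by blast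
  obtain m where m: "N \<le> m" "m \<in> A" "Suc m \<in> A"
    using dense_subspace_in_Lset_consecutive[OF V, of N] by blast
  have "m \<in> (\<lambda>a. a - 1) ` A"
    using m(3) by (rule rev_image_eqI) simp
  with m(1,2) show "\<exists>m\<ge>N. m \<in> A \<inter> (\<lambda>a. a - 1) ` A"
    by blast
qed

theorem theorem2p7:
  "(\<forall>A :: nat set. 0 \<notin> A \<longrightarrow> 1 \<notin> A \<longrightarrow> densely_lineable (Lset A)
       \<longrightarrow> infinite (A \<inter> (\<lambda>a. a - 1) ` A))
   \<and> \<not> densely_lineable (Lset {n. \<exists>k\<ge>1. n = 2 * k + 1})
   \<and> \<not> densely_lineable (Lset {n. \<exists>k\<ge>1. n = 2 * k})"
proof (intro conjI)
  show "\<forall>A :: nat set. 0 \<notin> A \<longrightarrow> 1 \<notin> A \<longrightarrow> densely_lineable (Lset A)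
       \<longrightarrow> infinite (A \<inter> (\<lambda>a. a - 1) ` A)"
    using densely_lineable_Lset_imp_infinite by blast
  have "{n::nat. \<exists>k\<ge>1. n = 2 * k + 1} \<inter> (\<lambda>a. a - 1) ` {n. \<exists>k\<ge>1. n = 2 * k + 1} = {}"
    by auto presburger
  then show "\<not> densely_lineable (Lset {n. \<exists>k\<ge>1. n = 2 * k + 1})"
    using densely_lineable_Lset_imp_infinite by fastforce
  have "{n::nat. \<exists>k\<ge>1. n = 2 * k} \<inter> (\<lambda>a. a - 1) ` {n. \<exists>k\<ge>1. n = 2 * k} = {}"
    by auto presburger
  then show "\<not> densely_lineable (Lset {n. \<exists>k\<ge>1. n = 2 * k})"
    using densely_lineable_Lset_imp_infinite by fastforce
qed

end
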